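(* Let $(\mathcal A,\cdot,\ast,D)$ be a special GDN-Poisson admissible algebra and define $x\circ y:=x\ast Dy$ for $x,y\in\mathcal A$. Then $(\mathcal A,\cdot,\circ)$ is a GDN-Poisson algebra.
   Context: A special GDN-Poisson admissible algebra $(\mathcal A,\cdot,\ast,D)$ is a vector space with bilinear products $\cdot,\ast$ and a linear map $D$ such that $(\mathcal A,\cdot)$ is commutative associative with unit $e$, $(\mathcal A,\ast)$ is commutative associative, and $(x\cdot y)\ast z=x\cdot(y\ast z)$, $D(x\ast y)=(Dx)\ast y+x\ast(Dy)$, $D(x\cdot y)=(Dx)\cdot y+x\cdot(Dy)-x\cdot y\cdot(De)$. A GDN-Poisson algebra is a vector space with bilinear products $\cdot,\circ$ such that $(\mathcal A,\cdot)$ is commutative associative with unit $e$, $x\circ(y\circ z)-(x\circ y)\circ z=y\circ(x\circ z)-(y\circ x)\circ z$, $(x\circ y)\circ z=(x\circ z)\circ y$, $(x\cdot y)\circ z=x\cdot(y\circ z)$, and $(x\circ y)\cdot z-x\circ(y\cdot z)=(y\circ x)\cdot z-y\circ(x\cdot z)$. *)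

theory Defs
  imports Complex_Main
begin

definition bilinear_prod :: "('k::field \<Rightarrow> 'a::ab_group_add \<Rightarrow> 'a) \<Rightarrow> ('a \<Rightarrow> 'a \<Rightarrow> 'a) \<Rightarrow> bool" where
  "bilinear_prod smul p \<longleftrightarrow>
     (\<forall>x. Vector_Spaces.linear smul smul (\<lambda>y. p x y)) \<and> (\<forall>y. Vector_Spaces.linear smul smul (\<lambda>x. p x y))"

definition special_GDN_Poisson_admissible ::
  "('k::field \<Rightarrow> 'a::ab_group_add \<Rightarrow> 'a) \<Rightarrow> ('a \<Rightarrow> 'a \<Rightarrow> 'a) \<Rightarrow> ('a \<Rightarrow> 'a \<Rightarrow> 'a) \<Rightarrow> ('a \<Rightarrow> 'a) \<Rightarrow> bool" where
  "special_GDN_Poisson_admissible smul dot ast D \<longleftrightarrow>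
     vector_space smul \<and> bilinear_prod smul dot \<and> bilinear_prod smul ast \<and> Vector_Spaces.linear smul smul D \<and>
     (\<forall>x y. dot x y = dot y x) \<and> (\<forall>x y z. dot (dot x y) z = dot x (dot y z)) \<and>
     (\<exists>e. \<forall>x. dot e x = x) \<and>
     (\<forall>x y. ast x y = ast y x) \<and> (\<forall>x y z. ast (ast x y) z = ast x (ast y z)) \<and>
     (\<forall>x y z. ast (dot x y) z = dot x (ast y z)) \<and>
     (\<forall>x y. D (ast x y) = ast (D x) y + ast x (D y)) \<and>
     (\<forall>e. (\<forall>x. dot e x = x) \<longrightarrow>
        (\<forall>x y. D (dot x y) = dot (D x) y + dot x (D y) - dot (dot x y) (D e)))"

definition GDN_Poisson ::
  "('k::field \<Rightarrow> 'a::ab_group_add \<Rightarrow> 'a) \<Rightarrow> ('a \<Rightarrow> 'a \<Rightarrow> 'a) \<Rightarrow> ('a \<Rightarrow> 'a \<Rightarrow> 'a) \<Rightarrow> bool" where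
  "GDN_Poisson smul dot circ \<longleftrightarrow>
     vector_space smul \<and> bilinear_prod smul dot \<and> bilinear_prod smul circ \<and>
     (\<forall>x y. dot x y = dot y x) \<and> (\<forall>x y z. dot (dot x y) z = dot x (dot y z)) \<and>
     (\<exists>e. \<forall>x. dot e x = x) \<and>
     (\<forall>x y z. circ x (circ y z) - circ (circ x y) z = circ y (circ x z) - circ (circ y x) z) \<and>
     (\<forall>x y z. circ (circ x y) z = circ (circ x z) y) \<and>
     (\<forall>x y z. circ (dot x y) z = dot x (circ y z)) \<and>
     (\<forall>x y z. dot (circ x y) z - circ x (dot y z) = dot (circ y x) z - circ y (dot x z))"

end

theory Submission
  imports Defs
begin

text \<open>The Novikov identities for \<open>x \<circ> y = x \<ast> Dy\<close> are the classical Gelfand--Dorfman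
construction: in a commutative associative algebra with derivation \<open>D\<close>, both sides of the
left-symmetry identity reduce to \<open>x \<ast> y \<ast> D\<^sup>2z\<close>. For the compatibility with \<open>\<cdot>\<close>, the
unit \<open>e\<close> and the mixed associativity force \<open>x \<ast> y = x \<cdot> y \<cdot> c\<close> with \<open>c = e \<ast> e\<close>; expanding
\<open>D(y \<cdot> z)\<close> by the twisted Leibniz rule then makes both sides of the identity equal to an
expression symmetric in \<open>x\<close> and \<open>y\<close>.\<close>

lemma bilinear_prod_compose_right:
  assumes "bilinear_prod smul p" and "Vector_Spaces.linear smul smul D"
  shows "bilinear_prod smul (\<lambda>x y. p x (D y))"
proof -
  have "Vector_Spaces.linear smul smul ((\<lambda>y. p x y) \<circ> D)" for x
    using assms by (intro Vector_Spaces.linear_compose) (auto simp: bilinear_prod_def)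
  then show ?thesis
    using assms(1) by (simp add: bilinear_prod_def comp_def)
qed

lemma bilinear_prod_add_right:
  assumes "bilinear_prod smul p"
  shows "p x (a + b) = p x a + p x b"
  using assms module_hom.add unfolding bilinear_prod_def linear_iff_module_hom by metis

lemma bilinear_prod_diff_right:
  assumes "bilinear_prod smul p"
  shows "p x (a - b) = p x a - p x b"
  using assms module_hom.diff unfolding bilinear_prod_def linear_iff_module_hom by metis

lemma comm_assoc_right_commutative:
  fixes ast :: "'a \<Rightarrow> 'a \<Rightarrow> 'a"
  assumes comm: "\<And>x y. ast x y = ast y x"
    and assoc: "\<And>x y z. ast (ast x y) z = ast x (ast y z)"
  shows "ast (ast x a) b = ast (ast x b) a"
  using assms by metis

lemma derivation_product_left_symmetric:
  fixes ast :: "'a::ab_group_add \<Rightarrow> 'a \<Rightarrow> 'a"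
  assumes comm: "\<And>x y. ast x y = ast y x"
    and assoc: "\<And>x y z. ast (ast x y) z = ast x (ast y z)"
    and add_right: "\<And>x a b. ast x (a + b) = ast x a + ast x b"
    and derivation: "\<And>x y. D (ast x y) = ast (D x) y + ast x (D y)"
  shows "ast x (D (ast y (D z))) - ast (ast x (D y)) (D z)
       = ast y (D (ast x (D z))) - ast (ast y (D x)) (D z)"
proof -
  have reduce: "ast u (D (ast v (D z))) - ast (ast u (D v)) (D z) = ast u (ast v (D (D z)))"
    for u v
    by (simp add: derivation add_right assoc)
  show ?thesis
    unfolding reduce using comm assoc by metis
qed

lemma unital_mixed_product_factors:
  assumes unit: "\<And>x. dot e x = x"
    and dot_comm: "\<And>x y. dot x y = dot y x"
    and ast_comm: "\<And>x y. ast x y = ast y x"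
    and mixed: "\<And>x y z. ast (dot x y) z = dot x (ast y z)"
  shows "ast a b = dot a (dot b (ast e e))"
proof -
  have "ast a b = ast (dot a e) b" using unit dot_comm by metis
  also have "\<dots> = dot a (ast e b)" by (rule mixed)
  also have "ast e b = ast (dot b e) e" using unit dot_comm ast_comm by metis
  also have "\<dots> = dot b (ast e e)" by (rule mixed)
  finally show ?thesis .
qed

lemma twisted_derivation_compatibility:
  fixes dot :: "'a::ab_group_add \<Rightarrow> 'a \<Rightarrow> 'a"
  assumes comm: "\<And>x y. dot x y = dot y x"
    and assoc: "\<And>x y z. dot (dot x y) z = dot x (dot y z)"
    and add_right: "\<And>x a b. dot x (a + b) = dot x a + dot x b"
    and diff_right: "\<And>x a b. dot x (a - b) = dot x a - dot x b"
    and twisted_leibniz: "\<And>x y. D (dot x y) = dot (D x) y + dot x (D y) - dot (dot x y) (D e)"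
    and factors: "\<And>a b. ast a b = dot a (dot b c)"
  shows "dot (ast x (D y)) z - ast x (D (dot y z)) = dot (ast y (D x)) z - ast y (D (dot x z))"
proof -
  have left_comm: "\<And>x y z. dot x (dot y z) = dot y (dot x z)"
    using comm assoc by metis
  have reduce: "dot (ast u (D v)) z - ast u (D (dot v z))
      = dot u (dot v (dot (dot z (D e)) c)) - dot u (dot v (dot (D z) c))" for u v
    by (simp add: factors twisted_leibniz add_right diff_right assoc left_comm comm algebra_simps)
  show ?thesis
    unfolding reduce using assoc left_comm by metis
qed

theorem mainTheorem3:
  fixes smul :: "'k::field \<Rightarrow> 'a::ab_group_add \<Rightarrow> 'a"
    and dot ast :: "'a \<Rightarrow> 'a \<Rightarrow> 'a" and D :: "'a \<Rightarrow> 'a"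
  assumes "special_GDN_Poisson_admissible smul dot ast D"
  shows "GDN_Poisson smul dot (\<lambda>x y. ast x (D y))"
proof -
  note admissible = assms[unfolded special_GDN_Poisson_admissible_def]
  obtain e where unit: "\<And>x. dot e x = x"
    using admissible by auto
  have vector_space: "vector_space smul"
    and dot_bilinear: "bilinear_prod smul dot" and ast_bilinear: "bilinear_prod smul ast"
    and D_linear: "Vector_Spaces.linear smul smul D"
    and dot_comm: "\<And>x y. dot x y = dot y x"
    and dot_assoc: "\<And>x y z. dot (dot x y) z = dot x (dot y z)"
    and ast_comm: "\<And>x y. ast x y = ast y x"
    and ast_assoc: "\<And>x y z. ast (ast x y) z = ast x (ast y z)"
    and mixed: "\<And>x y z. ast (dot x y) z = dot x (ast y z)"
    and derivation: "\<And>x y. D (ast x y) = ast (D x) y + ast x (D y)"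
    and twisted_leibniz: "\<And>x y. D (dot x y) = dot (D x) y + dot x (D y) - dot (dot x y) (D e)"
    using admissible unit by blast+
  note dot_add = bilinear_prod_add_right[OF dot_bilinear]
    and dot_diff = bilinear_prod_diff_right[OF dot_bilinear]
    and ast_add = bilinear_prod_add_right[OF ast_bilinear]
  have factors: "\<And>a b. ast a b = dot a (dot b (ast e e))"
    using unit dot_comm ast_comm mixed by (rule unital_mixed_product_factors)
  show ?thesis
    unfolding GDN_Poisson_def
    using vector_space dot_bilinear dot_comm dot_assoc unit
      bilinear_prod_compose_right[OF ast_bilinear D_linear]
      derivation_product_left_symmetric[OF ast_comm ast_assoc ast_add derivation]
      comm_assoc_right_commutative[OF ast_comm ast_assoc] mixed
      twisted_derivation_compatibility[OF dot_comm dot_assoc dot_add dot_diff twisted_leibniz factors]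
    by blast
qed

end
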